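(* Let $(\boldsymbol{\Sigma},\sigma)$ be a primitive Markov subshift on a countable alphabet, with associated set $\mathbb F$. Suppose the uniformly continuous potential $A:\boldsymbol\Sigma\to\mathbb R$ is bounded above and satisfies $\inf A|_{\bigcup_{i\in\mathbb F}[i]}>-\infty$. Then $$\beta_A=\inf_{f\in C^0(\boldsymbol\Sigma)}\ \sup_{\mathbf x\in\boldsymbol\Sigma}\big(A+f-f\circ\sigma\big)(\mathbf x).$$
   Context: Let $\mathbf M:\mathbb Z_+\times\mathbb Z_+\to\{0,1\}$ be a transition matrix. Put $\mathcal B_0=\{i:\mathbf M(i,j)=1\text{ for some }j\}$, $\mathcal B_n=\{i:\mathbf M(i,j)=1\text{ for some }j\in\mathcal B_{n-1}\}$. $\mathbf M$ is primitive if there exist $\mathbb F\subseteq\mathbb Z_+$ and an integer $K_0\ge0$ such that for all $i,j\in\bigcap_{n\ge0}\mathcal B_n$ there are $\ell_1,\dots,\ell_{K_0}\in\mathbb F$ with $\mathbf M(i,\ell_1)\mathbf M(\ell_1,\ell_2)\cdots\mathbf M(\ell_{K_0},j)=1$. $\boldsymbol\Sigma=\{\mathbf x\in\mathbb Z_+^{\mathbb Z_+}:\mathbf M(x_j,x_{j+1})=1\ \forall j\}$ with metric $d(\mathbf x,\mathbf y)=\lambda^{\min\{j:x_j\neq y_j\}}$, $\lambda\in(0,1)$ fixed; $\sigma$ the left shift; $[i]=\{\mathbf x:x_0=i\}$. $C^0(\boldsymbol\Sigma)$ = continuous real-valued functions on $\boldsymbol\Sigma$. $\mathcal M_\sigma$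 = $\sigma$-invariant Borel probabilities; $\beta_A=\sup_{\mu\in\mathcal M_\sigma}\int A\,d\mu$. $\mathrm{Var}_k(A)=\sup\{A(\mathbf x)-A(\mathbf y):d(\mathbf x,\mathbf y)\le\lambda^k\}$; uniformly continuous means $\mathrm{Var}_k(A)\to0$. *)

theory Defs
  imports "HOL-Probability.Probability"
begin

(* Alphabet Z_+ is rendered as nat. A transition matrix M : Z_+ x Z_+ -> {0,1}
   is rendered as a relation M :: nat => nat => bool (M i j <-> M(i,j) = 1). *)

fun Bset :: "(nat \<Rightarrow> nat \<Rightarrow> bool) \<Rightarrow> nat \<Rightarrow> nat set" where
  "Bset M 0 = {i. \<exists>j. M i j}"
| "Bset M (Suc n) = {i. \<exists>j\<in>Bset M n. M i j}"

definition primitive_with :: "(nat \<Rightarrow> nat \<Rightarrow> bool) \<Rightarrow> nat set \<Rightarrow> nat \<Rightarrow> bool" where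
  "primitive_with M F K0 \<longleftrightarrow>
     (\<forall>i\<in>(\<Inter>n. Bset M n). \<forall>j\<in>(\<Inter>n. Bset M n).
        \<exists>l :: nat \<Rightarrow> nat. l 0 = i \<and> l (Suc K0) = j \<and>
          (\<forall>k\<in>{1..K0}. l k \<in> F) \<and> (\<forall>k\<le>K0. M (l k) (l (Suc k))))"

definition primitive :: "(nat \<Rightarrow> nat \<Rightarrow> bool) \<Rightarrow> bool" where
  "primitive M \<longleftrightarrow> (\<exists>F K0. primitive_with M F K0)"

definition Sigma_M :: "(nat \<Rightarrow> nat \<Rightarrow> bool) \<Rightarrow> (nat \<Rightarrow> nat) set" where
  "Sigma_M M = {x. \<forall>j. M (x j) (x (Suc j))}"

definition shift :: "(nat \<Rightarrow> nat) \<Rightarrow> (nat \<Rightarrow> nat)" where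
  "shift x = (\<lambda>j. x (Suc j))"

definition dist_lam :: "real \<Rightarrow> (nat \<Rightarrow> nat) \<Rightarrow> (nat \<Rightarrow> nat) \<Rightarrow> real" where
  "dist_lam lam x y = (if x = y then 0 else lam ^ (LEAST j. x j \<noteq> y j))"

definition cyl :: "(nat \<Rightarrow> nat \<Rightarrow> bool) \<Rightarrow> nat \<Rightarrow> (nat \<Rightarrow> nat) set" where
  "cyl M i = {x \<in> Sigma_M M. x 0 = i}"

definition C0 :: "real \<Rightarrow> (nat \<Rightarrow> nat \<Rightarrow> bool) \<Rightarrow> ((nat \<Rightarrow> nat) \<Rightarrow> real) set" where
  "C0 lam M = {f. \<forall>x\<in>Sigma_M M. \<forall>e>0. \<exists>\<delta>>0. \<forall>y\<in>Sigma_M M.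
                   dist_lam lam x y < \<delta> \<longrightarrow> \<bar>f y - f x\<bar> < e}"

(* Var_k(A) -> 0, unfolded: for every e > 0 there is k with
   A x - A y <= e whenever x, y in Sigma and d(x,y) <= lam^k *)
definition unif_cont_pot :: "real \<Rightarrow> (nat \<Rightarrow> nat \<Rightarrow> bool) \<Rightarrow> ((nat \<Rightarrow> nat) \<Rightarrow> real) \<Rightarrow> bool" where
  "unif_cont_pot lam M A \<longleftrightarrow>
     (\<forall>e>0. \<exists>k. \<forall>x\<in>Sigma_M M. \<forall>y\<in>Sigma_M M.
        dist_lam lam x y \<le> lam ^ k \<longrightarrow> A x - A y \<le> e)"

(* Borel sigma-algebra of Sigma (product topology of the discrete alphabet,
   which is the topology of d) *)
definition borel_Sigma :: "(nat \<Rightarrow> nat \<Rightarrow> bool) \<Rightarrow> (nat \<Rightarrow> nat) measure" where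
  "borel_Sigma M = restrict_space borel (Sigma_M M)"

definition invariant_probs :: "(nat \<Rightarrow> nat \<Rightarrow> bool) \<Rightarrow> (nat \<Rightarrow> nat) measure set" where
  "invariant_probs M = {\<mu>. prob_space \<mu> \<and> sets \<mu> = sets (borel_Sigma M) \<and>
      shift \<in> measurable \<mu> \<mu> \<and> distr \<mu> \<mu> shift = \<mu>}"

definition ext_integral :: "(nat \<Rightarrow> nat) measure \<Rightarrow> ((nat \<Rightarrow> nat) \<Rightarrow> real) \<Rightarrow> ereal" where
  "ext_integral \<mu> A =
     enn2ereal (\<integral>\<^sup>+ x. ennreal (max (A x) 0) \<partial>\<mu>) - enn2ereal (\<integral>\<^sup>+ x. ennreal (max (- A x) 0) \<partial>\<mu>)"

definition beta :: "(nat \<Rightarrow> nat \<Rightarrow> bool) \<Rightarrow> ((nat \<Rightarrow> nat) \<Rightarrow> real) \<Rightarrow> ereal" where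
  "beta M A = (SUP \<mu>\<in>invariant_probs M. ext_integral \<mu> A)"

end

theory Submission
  imports Defs
begin

(* (<=) For an invariant probability mu and a continuous f with s = sup (A + f - f o sigma) < oo,
   the function A - s is bounded by the coboundary f o sigma - f; truncating f and applying
   Fatou's lemma shows that such a function has non-positive integral, so  int A dmu <= s.

   (>=) Given beta_A <= b < c we construct a continuous "sub-action" f with A + f - f o sigma <= c.
   Fix a point z and a window length k on which A oscillates by at most (c - b)/2.  Put
     f x = sup { sum_{j<n} (A(sigma^j y) - c) :  sigma^n y = x,  y starts with z_0 ... z_{k-1} }.
   The inequality A + f - f o sigma <= c is immediate from the definition.  The supremum is finite
   because every such orbit segment can be closed, through connecting paths given by primitivity,
   into a periodic orbit; the uniform measure on a periodic orbit is invariant, so its Birkhoff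
   average is at most beta_A <= b.  Continuity of f follows from uniform continuity of A, since
   near-maximising segments have bounded length. *)

definition shiftn :: "nat \<Rightarrow> (nat \<Rightarrow> nat) \<Rightarrow> (nat \<Rightarrow> nat)" where
  "shiftn j y = (\<lambda>i. y (i + j))"

definition agree :: "nat \<Rightarrow> (nat \<Rightarrow> nat) \<Rightarrow> (nat \<Rightarrow> nat) \<Rightarrow> bool" where
  "agree m a b \<longleftrightarrow> (\<forall>i<m. a i = b i)"

definition prepend :: "nat \<Rightarrow> (nat \<Rightarrow> nat) \<Rightarrow> (nat \<Rightarrow> nat) \<Rightarrow> (nat \<Rightarrow> nat)" where
  "prepend n w x = (\<lambda>j. if j < n then w j else x (j - n))"

lemma prepend_before: "j < n \<Longrightarrow> prepend n w x j = w j"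
  by (simp add: prepend_def)

lemma prepend_after: "n \<le> j \<Longrightarrow> prepend n w x j = x (j - n)"
  by (simp add: prepend_def)

lemma shiftn_0 [simp]: "shiftn 0 y = y"
  by (simp add: shiftn_def)

lemma shiftn_Suc: "shiftn (Suc j) y = shift (shiftn j y)"
  by (simp add: shiftn_def shift_def)

lemma shiftn_shiftn: "shiftn i (shiftn j y) = shiftn (i + j) y"
  by (simp add: shiftn_def add.assoc)

lemma shiftn_prepend [simp]: "shiftn n (prepend n w x) = x"
  by (simp add: shiftn_def prepend_def)

lemma shift_Sigma: "x \<in> Sigma_M M \<Longrightarrow> shift x \<in> Sigma_M M"
  by (simp add: Sigma_M_def shift_def)

lemma shiftn_Sigma: "x \<in> Sigma_M M \<Longrightarrow> shiftn j x \<in> Sigma_M M"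
  by (simp add: Sigma_M_def shiftn_def)

lemma agree_sym: "agree m a b \<Longrightarrow> agree m b a"
  by (auto simp: agree_def)

lemma agree_mono: "agree m a b \<Longrightarrow> k \<le> m \<Longrightarrow> agree k a b"
  by (auto simp: agree_def)

lemma prepend_Sigma:
  assumes "\<And>j. Suc j < n \<Longrightarrow> M (w j) (w (Suc j))" and "0 < n \<Longrightarrow> M (w (n - 1)) (x 0)"
    and "x \<in> Sigma_M M"
  shows "prepend n w x \<in> Sigma_M M"
  unfolding Sigma_M_def
proof (intro CollectI allI)
  fix j
  consider "Suc j < n" | "Suc j = n" | "n \<le> j" by linarith
  then show "M (prepend n w x j) (prepend n w x (Suc j))"
  proof cases
    case 3
    then have "Suc j - n = Suc (j - n)" by auto
    then show ?thesis using 3 assms(3) by (auto simp: Sigma_M_def prepend_def)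
  qed (use assms(1,2) in \<open>auto simp: prepend_def\<close>)
qed

lemma periodic_extension:
  assumes P: "0 < P" and adm: "\<And>t. t < P \<Longrightarrow> M (u t) (u (Suc t))" and loop: "u P = u 0"
  shows "(\<lambda>t. u (t mod P)) \<in> Sigma_M M" and "shiftn P (\<lambda>t. u (t mod P)) = (\<lambda>t. u (t mod P))"
proof -
  show "(\<lambda>t. u (t mod P)) \<in> Sigma_M M"
    unfolding Sigma_M_def
  proof (intro CollectI allI)
    fix t
    have r: "t mod P < P" using P by simp
    show "M (u (t mod P)) (u (Suc t mod P))"
    proof (cases "Suc (t mod P) = P")
      case True
      then have "Suc t mod P = 0" by (metis mod_Suc)
      then show ?thesis using adm[OF r] True loop by simp
    next
      case False
      then have "Suc t mod P = Suc (t mod P)" by (metis mod_Suc)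
      then show ?thesis using adm[OF r] by simp
    qed
  qed
  show "shiftn P (\<lambda>t. u (t mod P)) = (\<lambda>t. u (t mod P))"
    by (simp add: shiftn_def fun_eq_iff)
qed

lemma shiftn_mod_period:
  assumes "shiftn P q = q"
  shows "shiftn n q = shiftn (n mod P) q"
proof -
  have "shiftn (a * P + r) q = shiftn r q" for a r
    by (induction a) (simp_all, metis assms add.assoc add.commute shiftn_shiftn)
  then show ?thesis by (metis div_mult_mod_eq)
qed

lemma sum_lessThan_add_split:
  fixes g :: "nat \<Rightarrow> 'a::comm_monoid_add"
  shows "(\<Sum>j<n + m. g j) = (\<Sum>j<n. g j) + (\<Sum>t<m. g (n + t))"
  by (induction m) (simp_all add: add.assoc)

lemma Sigma_in_Bset: "x \<in> Sigma_M M \<Longrightarrow> x j \<in> (\<Inter>n. Bset M n)"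
proof -
  assume x: "x \<in> Sigma_M M"
  have "\<forall>j. x j \<in> Bset M n" for n
    by (induction n) (use x in \<open>auto simp: Sigma_M_def\<close>)
  then show ?thesis by auto
qed

lemma agree_imp_dist_le:
  assumes "0 < lam" "lam < 1" "agree k a b"
  shows "dist_lam lam a b \<le> lam ^ k"
proof (cases "a = b")
  case False
  then obtain j where j: "a j \<noteq> b j" by auto
  have "k \<le> (LEAST j. a j \<noteq> b j)"
  proof (rule ccontr)
    assume "\<not> ?thesis"
    then have "a (LEAST j. a j \<noteq> b j) = b (LEAST j. a j \<noteq> b j)"
      using assms(3) by (auto simp: agree_def)
    moreover have "a (LEAST j. a j \<noteq> b j) \<noteq> b (LEAST j. a j \<noteq> b j)" using j by (rule LeastI)
    ultimately show False by simp
  qed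
  then show ?thesis using False assms by (simp add: dist_lam_def power_decreasing)
qed (use assms in \<open>simp add: dist_lam_def\<close>)

lemma dist_less_imp_agree:
  assumes "0 < lam" "lam < 1" "dist_lam lam a b < lam ^ m"
  shows "agree m a b"
proof (cases "a = b")
  case False
  then have "lam ^ (LEAST j. a j \<noteq> b j) < lam ^ m" using assms by (simp add: dist_lam_def)
  then have "m < (LEAST j. a j \<noteq> b j)" using assms by (simp add: power_strict_decreasing_iff)
  then show ?thesis unfolding agree_def using not_less_Least by (metis (mono_tags) less_trans)
qed (simp add: agree_def)

lemma unif_cont_agree:
  assumes "0 < lam" "lam < 1" "unif_cont_pot lam M A" "e > 0"
  shows "\<exists>k. \<forall>a\<in>Sigma_M M. \<forall>b\<in>Sigma_M M. agree k a b \<longrightarrow> \<bar>A a - A b\<bar> \<le> e"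
proof -
  obtain k where k: "\<forall>x\<in>Sigma_M M. \<forall>y\<in>Sigma_M M. dist_lam lam x y \<le> lam ^ k \<longrightarrow> A x - A y \<le> e"
    using assms unfolding unif_cont_pot_def by blast
  show ?thesis
  proof (intro exI ballI impI)
    fix a b assume ab: "a \<in> Sigma_M M" "b \<in> Sigma_M M" "agree k a b"
    then have "A a - A b \<le> e" "A b - A a \<le> e"
      using k agree_imp_dist_le[OF assms(1,2)] agree_sym by blast+
    then show "\<bar>A a - A b\<bar> \<le> e" by linarith
  qed
qed

lemma unif_cont_agree_mono:
  assumes "\<forall>a\<in>Sigma_M M. \<forall>b\<in>Sigma_M M. agree k a b \<longrightarrow> \<bar>A a - A b\<bar> \<le> e" and "k \<le> m"
  shows "\<forall>a\<in>Sigma_M M. \<forall>b\<in>Sigma_M M. agree m a b \<longrightarrow> \<bar>A a - A b\<bar> \<le> e"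
  using assms agree_mono by blast

lemma sum_le_of_agree:
  assumes osc: "\<forall>a\<in>Sigma_M M. \<forall>b\<in>Sigma_M M. agree m a b \<longrightarrow> \<bar>A a - A b\<bar> \<le> \<eta>"
    and fam: "\<And>j. j < n \<Longrightarrow> g j \<in> Sigma_M M \<and> h j \<in> Sigma_M M \<and> agree m (g j) (h j)"
  shows "(\<Sum>j<n. A (g j)) \<le> (\<Sum>j<n. A (h j)) + real n * \<eta>"
proof -
  have "(\<Sum>j<n. A (g j)) \<le> (\<Sum>j<n. A (h j) + \<eta>)"
  proof (rule sum_mono)
    fix j assume "j \<in> {..<n}"
    then have "\<bar>A (g j) - A (h j)\<bar> \<le> \<eta>" using osc fam by blast
    then show "A (g j) \<le> A (h j) + \<eta>" by linarith
  qed
  then show ?thesis by (simp add: sum.distrib)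
qed

lemma space_borel_Sigma [simp]: "space (borel_Sigma M) = Sigma_M M"
  by (simp add: borel_Sigma_def space_restrict_space)

lemma open_agree: "open {y::nat\<Rightarrow>nat. agree m x y}"
proof -
  have "open {f::nat\<Rightarrow>nat. \<forall>i\<in>{..<m}. f (id i) \<in> {x i}}"
    by (rule product_topology_basis') (simp, rule discrete_topology_class.open_discrete)
  moreover have "{f::nat\<Rightarrow>nat. \<forall>i\<in>{..<m}. f (id i) \<in> {x i}} = {y. agree m x y}"
    by (auto simp: agree_def)
  ultimately show ?thesis by simp
qed

lemma measurable_if_cylinder_continuous:
  fixes h :: "(nat \<Rightarrow> nat) \<Rightarrow> real"
  assumes "\<And>x e. x \<in> Sigma_M M \<Longrightarrow> e > 0 \<Longrightarrow>
             \<exists>m. \<forall>y\<in>Sigma_M M. agree m x y \<longrightarrow> \<bar>h y - h x\<bar> < e"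
  shows "h \<in> borel_measurable (borel_Sigma M)"
  unfolding borel_Sigma_def
proof (rule borel_measurable_continuous_on_restrict, unfold continuous_on_topological,
       intro ballI allI impI)
  fix x B assume x: "x \<in> Sigma_M M" and B: "open B" "h x \<in> B"
  then obtain e where e: "e > 0" "ball (h x) e \<subseteq> B" using openE by blast
  obtain m where m: "\<forall>y\<in>Sigma_M M. agree m x y \<longrightarrow> \<bar>h y - h x\<bar> < e"
    using assms[OF x e(1)] by blast
  show "\<exists>U. open U \<and> x \<in> U \<and> (\<forall>y\<in>Sigma_M M. y \<in> U \<longrightarrow> h y \<in> B)"
  proof (intro exI conjI ballI impI)
    show "open {y. agree m x y}" by (rule open_agree)
    show "x \<in> {y. agree m x y}" by (simp add: agree_def)
    fix y assume "y \<in> Sigma_M M" "y \<in> {y. agree m x y}"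
    then have "\<bar>h y - h x\<bar> < e" using m by auto
    then show "h y \<in> B" using e(2) by (auto simp: dist_real_def ball_def abs_minus_commute)
  qed
qed

lemma C0_measurable:
  assumes "0 < lam" "lam < 1" "f \<in> C0 lam M"
  shows "f \<in> borel_measurable (borel_Sigma M)"
proof (rule measurable_if_cylinder_continuous)
  fix x e assume x: "x \<in> Sigma_M M" and e: "(e::real) > 0"
  obtain d where d: "d > 0" "\<forall>y\<in>Sigma_M M. dist_lam lam x y < d \<longrightarrow> \<bar>f y - f x\<bar> < e"
    using assms(3) x e unfolding C0_def by blast
  obtain m where "lam ^ m < d" using real_arch_pow_inv[OF d(1) assms(2)] by blast
  then have m: "lam ^ Suc m < d"
    using assms by (smt (verit) mult_left_le_one_le power_Suc zero_le_power)
  show "\<exists>m. \<forall>y\<in>Sigma_M M. agree m x y \<longrightarrow> \<bar>f y - f x\<bar> < e"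
  proof (intro exI ballI impI)
    fix y assume "y \<in> Sigma_M M" "agree (Suc m) x y"
    then show "\<bar>f y - f x\<bar> < e" using d m agree_imp_dist_le[OF assms(1,2)] by fastforce
  qed
qed

lemma unif_cont_measurable:
  assumes "0 < lam" "lam < 1" "unif_cont_pot lam M A"
  shows "A \<in> borel_measurable (borel_Sigma M)"
proof (rule measurable_if_cylinder_continuous)
  fix x e assume x: "x \<in> Sigma_M M" and e: "(e::real) > 0"
  obtain k where "\<forall>a\<in>Sigma_M M. \<forall>b\<in>Sigma_M M. agree k a b \<longrightarrow> \<bar>A a - A b\<bar> \<le> e/2"
    using unif_cont_agree[OF assms, of "e/2"] e by auto
  then show "\<exists>m. \<forall>y\<in>Sigma_M M. agree m x y \<longrightarrow> \<bar>A y - A x\<bar> < e"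
    using x e by (metis agree_sym half_gt_zero less_add_same_cancel1 field_sum_of_halves
        order_le_less_trans)
qed

lemma shift_measurable: "shift \<in> measurable (borel_Sigma M) (borel_Sigma M)"
  unfolding borel_Sigma_def
proof (rule measurable_restrict_space3)
  have "continuous_on UNIV (shift :: (nat \<Rightarrow> nat) \<Rightarrow> _)"
    unfolding shift_def by (intro continuous_on_coordinatewise_then_product) simp
  then show "shift \<in> borel_measurable borel" by (rule borel_measurable_continuous_onI)
  show "shift \<in> Sigma_M M \<rightarrow> Sigma_M M" using shift_Sigma by blast
qed

lemma ext_integral_integrable:
  assumes "integrable \<mu> h"
  shows "ext_integral \<mu> h = ereal (integral\<^sup>L \<mu> h)"
proof -
  have pos: "(\<lambda>x. ennreal (max (h x) 0)) = (\<lambda>x. ennreal (h x))"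
    and neg: "(\<lambda>x. ennreal (max (- h x) 0)) = (\<lambda>x. ennreal (- h x))"
    by (auto simp: max_def ennreal_neg)
  have fin: "(\<integral>\<^sup>+ x. ennreal (g x) \<partial>\<mu>) < \<infinity>" if "\<And>x. \<bar>g x\<bar> = \<bar>h x\<bar>" for g
  proof -
    have "(\<integral>\<^sup>+ x. ennreal (g x) \<partial>\<mu>) \<le> (\<integral>\<^sup>+ x. ennreal (norm (h x)) \<partial>\<mu>)"
      using that by (intro nn_integral_mono) (metis abs_ge_self ennreal_leI real_norm_def)
    also have "\<dots> < \<infinity>" using assms by (simp add: integrable_iff_bounded)
    finally show ?thesis .
  qed
  have real: "enn2ereal a = ereal (enn2real a)" if "a < \<infinity>" for a
    using that by (cases a rule: ennreal_cases) auto
  show ?thesis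
    unfolding ext_integral_def pos neg real_lebesgue_integral_def[OF assms]
    using real[OF fin[of h]] real[OF fin[of "\<lambda>x. - h x"]] by simp
qed

lemma ext_integral_bounded_above_cases:
  assumes "prob_space \<mu>" and [measurable]: "A \<in> borel_measurable \<mu>"
    and C: "\<And>x. x \<in> space \<mu> \<Longrightarrow> A x \<le> C"
  obtains "ext_integral \<mu> A = -\<infinity>" | "integrable \<mu> A"
proof -
  interpret prob_space \<mu> by fact
  have pos_fin: "(\<integral>\<^sup>+ x. ennreal (max (A x) 0) \<partial>\<mu>) < \<infinity>"
  proof -
    have "(\<integral>\<^sup>+ x. ennreal (max (A x) 0) \<partial>\<mu>) \<le> (\<integral>\<^sup>+ x. ennreal (max C 0) \<partial>\<mu>)"
      by (intro nn_integral_mono) (use C in \<open>auto intro!: ennreal_leI\<close>)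
    also have "\<dots> = ennreal (max C 0)" by (simp add: emeasure_space_1)
    finally show ?thesis by (simp add: order_le_less_trans)
  qed
  show ?thesis
  proof (cases "(\<integral>\<^sup>+ x. ennreal (max (- A x) 0) \<partial>\<mu>) = \<infinity>")
    case True
    then have "ext_integral \<mu> A = -\<infinity>"
      unfolding ext_integral_def using pos_fin
      by (cases "(\<integral>\<^sup>+ x. ennreal (max (A x) 0) \<partial>\<mu>)" rule: ennreal_cases) auto
    then show ?thesis by (rule that)
  next
    case False
    have "(\<integral>\<^sup>+ x. ennreal (norm (A x)) \<partial>\<mu>)
        = (\<integral>\<^sup>+ x. ennreal (max (A x) 0) + ennreal (max (- A x) 0) \<partial>\<mu>)"
      by (intro nn_integral_cong) (auto simp: max_def ennreal_neg)
    also have "\<dots> = (\<integral>\<^sup>+ x. ennreal (max (A x) 0) \<partial>\<mu>) + (\<integral>\<^sup>+ x. ennreal (max (- A x) 0) \<partial>\<mu>)"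
      by (rule nn_integral_add) auto
    also have "\<dots> < \<infinity>" using pos_fin False by (simp add: less_top)
    finally show ?thesis by (intro that) (simp add: integrable_iff_bounded)
  qed
qed

lemma integral_coboundary_zero:
  fixes g :: "'a \<Rightarrow> real"
  assumes T: "T \<in> measurable \<mu> \<mu>" and inv: "distr \<mu> \<mu> T = \<mu>" and g: "integrable \<mu> g"
  shows "integrable \<mu> (\<lambda>x. g (T x) - g x)" and "integral\<^sup>L \<mu> (\<lambda>x. g (T x) - g x) = 0"
proof -
  have gT: "integrable \<mu> (\<lambda>x. g (T x))"
    using integrable_distr_eq[OF T, of g] g inv by simp
  have "integral\<^sup>L \<mu> g = integral\<^sup>L (distr \<mu> \<mu> T) g" using inv by simp
  also have "\<dots> = integral\<^sup>L \<mu> (\<lambda>x. g (T x))"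
    using g by (intro integral_distr[OF T]) auto
  finally show "integral\<^sup>L \<mu> (\<lambda>x. g (T x) - g x) = 0" using g gT by simp
  show "integrable \<mu> (\<lambda>x. g (T x) - g x)" using g gT by simp
qed

(* Truncating u at level N
   gives integrable coboundaries with integral 0, and Fatou's lemma passes to the limit. *)
lemma integral_le_zero_below_coboundary:
  fixes \<psi> u :: "'a \<Rightarrow> real"
  assumes P: "prob_space \<mu>" and T: "T \<in> measurable \<mu> \<mu>" and inv: "distr \<mu> \<mu> T = \<mu>"
    and u: "u \<in> borel_measurable \<mu>" and psi: "integrable \<mu> \<psi>"
    and le: "\<And>x. x \<in> space \<mu> \<Longrightarrow> \<psi> x \<le> u (T x) - u x"
  shows "integral\<^sup>L \<mu> \<psi> \<le> 0"
proof -
  interpret prob_space \<mu> by (rule P)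
  define trunc where "trunc = (\<lambda>(N::nat) (t::real). max (- real N) (min (real N) t))"
  define h where "h = (\<lambda>N x. trunc N (u (T x)) - trunc N (u x))"
  define m where "m = (\<lambda>x. min (\<psi> x) 0)"
  have int_trunc: "integrable \<mu> (\<lambda>x. trunc N (u x))" for N
    by (rule integrable_const_bound[where B="real N"])
      (use u in \<open>auto intro!: AE_I2 simp: trunc_def\<close>)
  have int_h: "integrable \<mu> (h N)" and int_h0: "integral\<^sup>L \<mu> (h N) = 0" for N
    unfolding h_def using integral_coboundary_zero[OF T inv int_trunc] by auto
  have int_m: "integrable \<mu> m" unfolding m_def using psi by auto
  have m_le_h: "m x \<le> h N x" if "x \<in> space \<mu>" for N x
  proof -
    have "min (u (T x) - u x) 0 \<le> trunc N (u (T x)) - trunc N (u x)"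
      unfolding trunc_def by (auto simp: min_def max_def)
    then show ?thesis using le[OF that] unfolding m_def h_def by linarith
  qed
  have h_eventually: "eventually (\<lambda>N. h N x = u (T x) - u x) sequentially" for x
  proof -
    obtain N0 :: nat where "\<bar>u (T x)\<bar> \<le> real N0" "\<bar>u x\<bar> \<le> real N0"
      by (metis abs_ge_zero max.cobounded1 max.cobounded2 order.trans real_arch_simple)
    then show ?thesis unfolding eventually_sequentially h_def trunc_def
      by (intro exI[of _ N0]) (auto simp: min_def max_def)
  qed
  have "ennreal (integral\<^sup>L \<mu> (\<lambda>x. \<psi> x - m x)) = (\<integral>\<^sup>+ x. ennreal (\<psi> x - m x) \<partial>\<mu>)"
    by (rule nn_integral_eq_integral[symmetric]) (use psi int_m in \<open>auto simp: m_def\<close>)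
  also have "\<dots> \<le> (\<integral>\<^sup>+ x. liminf (\<lambda>N. ennreal (h N x - m x)) \<partial>\<mu>)"
  proof (rule nn_integral_mono)
    fix x assume x: "x \<in> space \<mu>"
    have "((\<lambda>N. ennreal (h N x - m x)) \<longlongrightarrow> ennreal (u (T x) - u x - m x)) sequentially"
      by (rule tendsto_eventually) (use h_eventually[of x] in \<open>auto elim: eventually_mono\<close>)
    then have "liminf (\<lambda>N. ennreal (h N x - m x)) = ennreal (u (T x) - u x - m x)"
      by (simp add: lim_imp_Liminf)
    then show "ennreal (\<psi> x - m x) \<le> liminf (\<lambda>N. ennreal (h N x - m x))"
      using le[OF x] by (simp add: ennreal_leI)
  qed
  also have "\<dots> \<le> liminf (\<lambda>N. \<integral>\<^sup>+ x. ennreal (h N x - m x) \<partial>\<mu>)"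
    by (rule nn_integral_liminf) (use int_h int_m in auto)
  also have "(\<lambda>N. \<integral>\<^sup>+ x. ennreal (h N x - m x) \<partial>\<mu>) = (\<lambda>N. ennreal (- integral\<^sup>L \<mu> m))"
  proof
    fix N
    have "(\<integral>\<^sup>+ x. ennreal (h N x - m x) \<partial>\<mu>) = ennreal (integral\<^sup>L \<mu> (\<lambda>x. h N x - m x))"
      by (rule nn_integral_eq_integral) (use int_h int_m m_le_h in auto)
    then show "(\<integral>\<^sup>+ x. ennreal (h N x - m x) \<partial>\<mu>) = ennreal (- integral\<^sup>L \<mu> m)"
      using int_h int_m int_h0 by simp
  qed
  finally have "ennreal (integral\<^sup>L \<mu> \<psi> - integral\<^sup>L \<mu> m) \<le> ennreal (- integral\<^sup>L \<mu> m)"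
    using psi int_m by (simp add: Liminf_const)
  moreover have "integral\<^sup>L \<mu> m \<le> 0"
    using integral_mono[OF int_m, of "\<lambda>_. 0"] by (auto simp: m_def)
  ultimately show ?thesis by simp
qed

lemma ext_integral_le_sup_cohomologous:
  assumes mu: "\<mu> \<in> invariant_probs M" and f: "f \<in> borel_measurable (borel_Sigma M)"
    and Am: "A \<in> borel_measurable (borel_Sigma M)" and C: "\<forall>x\<in>Sigma_M M. A x \<le> C"
  shows "ext_integral \<mu> A \<le> (SUP x\<in>Sigma_M M. ereal (A x + f x - f (shift x)))"
    (is "_ \<le> ?s")
proof -
  have P: "prob_space \<mu>" and S: "sets \<mu> = sets (borel_Sigma M)" and T: "shift \<in> measurable \<mu> \<mu>"
    and inv: "distr \<mu> \<mu> shift = \<mu>" using mu by (auto simp: invariant_probs_def)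
  interpret prob_space \<mu> by (rule P)
  have sp: "space \<mu> = Sigma_M M" using sets_eq_imp_space_eq[OF S] by simp
  have fm[measurable]: "f \<in> borel_measurable \<mu>" and Amu[measurable]: "A \<in> borel_measurable \<mu>"
    using f Am measurable_cong_sets[OF S refl] by blast+
  obtain x0 where x0: "x0 \<in> Sigma_M M" using not_empty sp by auto
  have upper: "ereal (A x + f x - f (shift x)) \<le> ?s" if "x \<in> Sigma_M M" for x
    using that by (rule SUP_upper)
  consider "?s = \<infinity>" | s' where "?s = ereal s'"
    using upper[OF x0] by (cases ?s) auto
  then show ?thesis
  proof cases
    case (2 s')
    show ?thesis
    proof (rule ext_integral_bounded_above_cases[OF P Amu])
      show "A x \<le> C" if "x \<in> space \<mu>" for x using C that sp by simp
    next
      assume intA: "integrable \<mu> A"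
      have "integral\<^sup>L \<mu> (\<lambda>x. A x - s') \<le> 0"
      proof (rule integral_le_zero_below_coboundary[OF P T inv fm])
        show "integrable \<mu> (\<lambda>x. A x - s')" using intA by simp
        fix x assume "x \<in> space \<mu>"
        then have "A x + f x - f (shift x) \<le> s'" using upper[of x] 2 sp by simp
        then show "A x - s' \<le> f (shift x) - f x" by linarith
      qed
      then have "integral\<^sup>L \<mu> A \<le> s'" using intA by (simp add: prob_space)
      then show ?thesis using ext_integral_integrable[OF intA] 2 by simp
    qed simp
  qed simp
qed

lemma beta_le_inf_sup:
  assumes "0 < lam" "lam < 1" "unif_cont_pot lam M A" "\<forall>x\<in>Sigma_M M. A x \<le> C"
  shows "beta M A \<le> (INF f\<in>C0 lam M. SUP x\<in>Sigma_M M. ereal (A x + f x - f (shift x)))"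
  unfolding beta_def
proof (rule SUP_least, rule INF_greatest)
  fix \<mu> f assume "\<mu> \<in> invariant_probs M" "f \<in> C0 lam M"
  then show "ext_integral \<mu> A \<le> (SUP x\<in>Sigma_M M. ereal (A x + f x - f (shift x)))"
    using ext_integral_le_sup_cohomologous C0_measurable[OF assms(1,2)]
      unif_cont_measurable[OF assms(1-3)] assms(4) by blast
qed

text \<open>Periodic orbits carry invariant measures, so their Birkhoff averages are at most beta.\<close>

definition orbit_measure :: "(nat \<Rightarrow> nat \<Rightarrow> bool) \<Rightarrow> nat \<Rightarrow> (nat \<Rightarrow> nat) \<Rightarrow> (nat \<Rightarrow> nat) measure" where
  "orbit_measure M P q = distr (measure_pmf (pmf_of_set {..<P})) (borel_Sigma M) (\<lambda>i. shiftn i q)"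

lemma orbit_map_measurable:
  "q \<in> Sigma_M M \<Longrightarrow> (\<lambda>i. shiftn i q) \<in> measurable (measure_pmf p) (borel_Sigma M)"
  using shiftn_Sigma by auto

(* shifting the orbit is the cyclic rotation i -> i + 1 mod P of the uniform index *)
lemma orbit_measure_invariant:
  assumes q: "q \<in> Sigma_M M" and P: "0 < P" and per: "shiftn P q = q"
  shows "orbit_measure M P q \<in> invariant_probs M"
proof -
  define U where "U = measure_pmf (pmf_of_set {..<P})"
  define g where "g = (\<lambda>i. shiftn i q)"
  define rot where "rot = (\<lambda>i. Suc i mod P)"
  let ?\<mu> = "orbit_measure M P q"
  have ne: "{..<P} \<noteq> {}" using P by auto
  have gm: "g \<in> measurable U (borel_Sigma M)" unfolding U_def g_def by (rule orbit_map_measurable[OF q])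
  have S: "sets ?\<mu> = sets (borel_Sigma M)" by (simp add: orbit_measure_def)
  have rot_bij: "inj_on rot {..<P}" "rot ` {..<P} = {..<P}"
  proof -
    have r: "k < P \<Longrightarrow> rot k = (if Suc k = P then 0 else Suc k)" for k
      unfolding rot_def by auto
    show inj: "inj_on rot {..<P}" by (rule inj_onI) (auto simp: r split: if_splits)
    show "rot ` {..<P} = {..<P}" by (rule endo_inj_surj) (use inj P in \<open>auto simp: rot_def\<close>)
  qed
  have "distr ?\<mu> ?\<mu> shift = distr ?\<mu> (borel_Sigma M) shift"
    by (rule distr_cong) (simp_all add: S)
  also have "\<dots> = distr U (borel_Sigma M) (shift \<circ> g)"
    unfolding orbit_measure_def U_def g_def[symmetric]
    by (rule distr_distr[OF shift_measurable gm[unfolded U_def]])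
  also have "\<dots> = distr U (borel_Sigma M) (g \<circ> rot)"
  proof (rule distr_cong)
    fix i show "(shift \<circ> g) i = (g \<circ> rot) i"
      unfolding g_def rot_def o_def using shiftn_mod_period[OF per, of "Suc i"] shiftn_Suc by simp
  qed simp_all
  also have "\<dots> = distr (distr U (count_space UNIV) rot) (borel_Sigma M) g"
    by (rule distr_distr[symmetric]) (use gm in \<open>auto simp: U_def\<close>)
  also have "distr U (count_space UNIV) rot = U"
    unfolding U_def map_pmf_rep_eq[symmetric] using map_pmf_of_set_inj[OF rot_bij(1) ne] rot_bij(2)
    by simp
  finally have "distr ?\<mu> ?\<mu> shift = ?\<mu>" unfolding orbit_measure_def U_def g_def by simp
  moreover have "prob_space ?\<mu>"
    unfolding orbit_measure_def by (rule prob_space.prob_space_distr[OF prob_space_measure_pmf gm[unfolded U_def g_def]])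
  moreover have "shift \<in> measurable ?\<mu> ?\<mu>"
    using shift_measurable measurable_cong_sets[OF S S] by blast
  ultimately show ?thesis unfolding invariant_probs_def using S by auto
qed

lemma orbit_measure_integral:
  assumes Am: "A \<in> borel_measurable (borel_Sigma M)" and q: "q \<in> Sigma_M M" and P: "0 < P"
  shows "integrable (orbit_measure M P q) A"
    and "integral\<^sup>L (orbit_measure M P q) A = (\<Sum>j<P. A (shiftn j q)) / P"
proof -
  have ne: "{..<P} \<noteq> {}" using P by auto
  note gm = orbit_map_measurable[OF q, of "pmf_of_set {..<P}"]
  have "integrable (measure_pmf (pmf_of_set {..<P})) (\<lambda>i. A (shiftn i q))"
    by (rule integrable_measure_pmf_finite) (use ne in simp)
  then show "integrable (orbit_measure M P q) A"
    unfolding orbit_measure_def using integrable_distr_eq[OF gm Am] by simp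
  have "integral\<^sup>L (orbit_measure M P q) A
      = integral\<^sup>L (measure_pmf (pmf_of_set {..<P})) (\<lambda>i. A (shiftn i q))"
    unfolding orbit_measure_def by (rule integral_distr[OF gm Am])
  also have "\<dots> = (\<Sum>j<P. A (shiftn j q)) / P"
    using ne by (subst integral_pmf_of_set) auto
  finally show "integral\<^sup>L (orbit_measure M P q) A = (\<Sum>j<P. A (shiftn j q)) / P" .
qed

lemma periodic_sum_le_beta:
  assumes Am: "A \<in> borel_measurable (borel_Sigma M)" and q: "q \<in> Sigma_M M" and P: "0 < P"
    and per: "shiftn P q = q" and b: "beta M A \<le> ereal b"
  shows "(\<Sum>j<P. A (shiftn j q)) \<le> real P * b"
proof -
  have "ereal ((\<Sum>j<P. A (shiftn j q)) / P) = ext_integral (orbit_measure M P q) A"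
    using ext_integral_integrable orbit_measure_integral[OF Am q P] by simp
  also have "\<dots> \<le> beta M A"
    unfolding beta_def by (rule SUP_upper[OF orbit_measure_invariant[OF q P per]])
  also have "\<dots> \<le> ereal b" by (rule b)
  finally have "(\<Sum>j<P. A (shiftn j q)) / P \<le> b" by simp
  then show ?thesis using P by (simp add: divide_le_eq mult.commute)
qed

definition admissible_path :: "(nat \<Rightarrow> nat \<Rightarrow> bool) \<Rightarrow> nat \<Rightarrow> nat \<Rightarrow> nat \<Rightarrow> (nat \<Rightarrow> nat) \<Rightarrow> bool" where
  "admissible_path M K a d l \<longleftrightarrow> l 0 = a \<and> l (Suc K) = d \<and> (\<forall>j\<le>K. M (l j) (l (Suc j)))"

lemma primitive_path_exists:
  assumes "primitive_with M F K0" "x \<in> Sigma_M M" "y \<in> Sigma_M M"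
  shows "\<exists>l. admissible_path M K0 (x i) (y j) l"
proof -
  obtain l where "l 0 = x i" "l (Suc K0) = y j" "\<forall>k\<le>K0. M (l k) (l (Suc k))"
    using assms(1) Sigma_in_Bset[OF assms(2)] Sigma_in_Bset[OF assms(3)]
    unfolding primitive_with_def by meson
  then show ?thesis unfolding admissible_path_def by blast
qed

lemma path_prepend_Sigma:
  assumes "admissible_path M K a d l" "x \<in> Sigma_M M" "x 0 = d"
  shows "prepend (Suc K) l x \<in> Sigma_M M"
  using assms by (intro prepend_Sigma) (auto simp: admissible_path_def)

lemma splice_Sigma:
  assumes w: "w \<in> Sigma_M M" and x: "x \<in> Sigma_M M" and join: "x 0 = w n"
  shows "prepend n w x \<in> Sigma_M M"
proof (rule prepend_Sigma[OF _ _ x])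
  show "M (w j) (w (Suc j))" for j using w by (simp add: Sigma_M_def)
  assume "0 < n"
  then have "Suc (n - 1) = n" by simp
  moreover have "M (w (n - 1)) (w (Suc (n - 1)))" using w by (simp add: Sigma_M_def)
  ultimately show "M (w (n - 1)) (x 0)" using join by simp
qed

text \<open>The sub-action.\<close>

locale subaction_construction =
  fixes M :: "nat \<Rightarrow> nat \<Rightarrow> bool" and K0 :: nat and A :: "(nat \<Rightarrow> nat) \<Rightarrow> real"
    and lam b gap :: real and z :: "nat \<Rightarrow> nat" and k :: nat
  assumes lam0: "0 < lam" and lam1: "lam < 1"
    and paths: "\<And>x y i j. x \<in> Sigma_M M \<Longrightarrow> y \<in> Sigma_M M \<Longrightarrow> \<exists>l. admissible_path M K0 (x i) (y j) l"
    and osc: "\<And>\<eta>. \<eta> > 0 \<Longrightarrow> \<exists>m. \<forall>a\<in>Sigma_M M. \<forall>a'\<in>Sigma_M M. agree m a a' \<longrightarrow> \<bar>A a - A a'\<bar> \<le> \<eta>"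
    and periodic: "\<And>q P. q \<in> Sigma_M M \<Longrightarrow> 0 < P \<Longrightarrow> shiftn P q = q \<Longrightarrow>
                     (\<Sum>j<P. A (shiftn j q)) \<le> real P * b"
    and z: "z \<in> Sigma_M M" and gap_pos: "0 < gap" and k1: "1 \<le> k"
    and osc_k: "\<forall>a\<in>Sigma_M M. \<forall>a'\<in>Sigma_M M. agree k a a' \<longrightarrow> \<bar>A a - A a'\<bar> \<le> gap"
begin

definition exit_path :: "nat \<Rightarrow> nat \<Rightarrow> nat" where
  "exit_path a = (SOME l. admissible_path M K0 a (z 0) l)"

definition entry_path :: "nat \<Rightarrow> nat \<Rightarrow> nat" where
  "entry_path a = (SOME l. admissible_path M K0 (z (k - 1)) a l)"

definition preimages :: "(nat \<Rightarrow> nat) \<Rightarrow> (nat \<times> (nat \<Rightarrow> nat)) set" where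
  "preimages x = {(n, y). y \<in> Sigma_M M \<and> agree k y z \<and> shiftn n y = x}"

definition birkhoff :: "nat \<Rightarrow> (nat \<Rightarrow> nat) \<Rightarrow> real" where
  "birkhoff n y = (\<Sum>j<n. A (shiftn j y) - (b + 2 * gap))"

definition subaction :: "(nat \<Rightarrow> nat) \<Rightarrow> real" where
  "subaction x = Sup ((\<lambda>(n, y). birkhoff n y) ` preimages x)"

definition return_word :: "(nat \<Rightarrow> nat) \<Rightarrow> (nat \<Rightarrow> nat)" where
  "return_word x = prepend (k - 1) x (prepend (Suc K0) (exit_path (x (k - 1))) z)"

(* upper bound for the sub-action, depending only on the k-block of x *)
definition bound_const :: "(nat \<Rightarrow> nat) \<Rightarrow> real" where
  "bound_const x = real (k + K0) * (b + gap) - (\<Sum>t<k + K0. A (shiftn t (return_word x)))"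

lemma exit_path: "x \<in> Sigma_M M \<Longrightarrow> admissible_path M K0 (x i) (z 0) (exit_path (x i))"
  unfolding exit_path_def using paths[OF _ z] by (rule someI_ex)

lemma entry_path: "x \<in> Sigma_M M \<Longrightarrow> admissible_path M K0 (z (k - 1)) (x 0) (entry_path (x 0))"
  unfolding entry_path_def using paths[OF z] by (rule someI_ex)

lemma return_word_Sigma:
  assumes x: "x \<in> Sigma_M M"
  shows "return_word x \<in> Sigma_M M"
proof -
  have l: "admissible_path M K0 (x (k - 1)) (z 0) (exit_path (x (k - 1)))" by (rule exit_path[OF x])
  show ?thesis
    unfolding return_word_def
    by (rule splice_Sigma[OF x path_prepend_Sigma[OF l z refl]])
      (use l in \<open>simp add: prepend_def admissible_path_def\<close>)
qed

lemma return_word_agree: "agree k x x' \<Longrightarrow> return_word x = return_word x'"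
proof -
  assume a: "agree k x x'"
  then have "x (k - 1) = x' (k - 1)" using k1 by (simp add: agree_def)
  moreover have "prepend (k - 1) x w = prepend (k - 1) x' w" for w
    using a by (auto simp: prepend_def agree_def)
  ultimately show ?thesis unfolding return_word_def by metis
qed

lemma preimages_Sigma: "(n, y) \<in> preimages x \<Longrightarrow> x \<in> Sigma_M M"
  unfolding preimages_def using shiftn_Sigma by auto

lemma preimages_nonempty:
  assumes x: "x \<in> Sigma_M M"
  shows "(k + K0, prepend (k - 1) z (prepend (Suc K0) (entry_path (x 0)) x)) \<in> preimages x"
proof -
  define l where "l = entry_path (x 0)"
  have p: "admissible_path M K0 (z (k - 1)) (x 0) l" unfolding l_def by (rule entry_path[OF x])
  define y where "y = prepend (k - 1) z (prepend (Suc K0) l x)"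
  have l0: "l 0 = z (k - 1)" using p by (simp add: admissible_path_def)
  have "y \<in> Sigma_M M"
    unfolding y_def by (rule splice_Sigma[OF z path_prepend_Sigma[OF p x refl]])
      (simp add: l0 prepend_def)
  moreover have "agree k y z"
    unfolding agree_def
  proof (intro allI impI)
    fix i assume "i < k"
    then consider "i < k - 1" | "i = k - 1" by linarith
    then show "y i = z i" by cases (simp_all add: y_def prepend_def l0)
  qed
  moreover have "shiftn (k - 1 + Suc K0) y = x"
    by (simp add: y_def shiftn_def prepend_def fun_eq_iff)
  moreover have "k - 1 + Suc K0 = k + K0" using k1 by simp
  ultimately show ?thesis by (simp add: preimages_def y_def l_def)
qed

definition closing_word :: "nat \<Rightarrow> (nat \<Rightarrow> nat) \<Rightarrow> (nat \<Rightarrow> nat) \<Rightarrow> (nat \<Rightarrow> nat)" where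
  "closing_word n y x = prepend (n + k - 1) y (exit_path (x (k - 1)))"

lemma preimagesD:
  assumes "(n, y) \<in> preimages x"
  shows "y \<in> Sigma_M M" and "agree k y z" and "\<And>i. y (i + n) = x i"
  using assms by (auto simp: preimages_def shiftn_def dest: fun_cong)

lemma closing_word_prefix:
  assumes p: "(n, y) \<in> preimages x" and t: "t < n + k"
  shows "closing_word n y x t = y t"
proof (cases "t < n + k - 1")
  case False
  then have "t - (n + k - 1) = 0" and t_eq: "t = k - 1 + n" using t k1 by linarith+
  then have "closing_word n y x t = exit_path (x (k - 1)) 0"
    using False by (simp add: closing_word_def prepend_after)
  also have "\<dots> = x (k - 1)"
    using exit_path[OF preimages_Sigma[OF p]] by (simp add: admissible_path_def)
  finally show ?thesis using preimagesD(3)[OF p, of "k - 1"] t_eq by simp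
qed (simp add: closing_word_def prepend_before)

lemma closing_word_loop:
  assumes p: "(n, y) \<in> preimages x"
  shows "\<And>t. t < n + k + K0 \<Longrightarrow> M (closing_word n y x t) (closing_word n y x (Suc t))"
    and "closing_word n y x (n + k + K0) = closing_word n y x 0"
proof -
  let ?u = "closing_word n y x"
  have lp: "admissible_path M K0 (x (k - 1)) (z 0) (exit_path (x (k - 1)))"
    by (rule exit_path[OF preimages_Sigma[OF p]])
  have tail: "?u t = exit_path (x (k - 1)) (t - (n + k - 1))" if "n + k - 1 \<le> t" for t
    using that by (simp add: closing_word_def prepend_def)
  show "M (?u t) (?u (Suc t))" if "t < n + k + K0" for t
  proof (cases "Suc t < n + k")
    case True
    then show ?thesis using closing_word_prefix[OF p] preimagesD(1)[OF p] by (simp add: Sigma_M_def)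
  next
    case False
    then have "n + k - 1 \<le> t" and "t - (n + k - 1) \<le> K0"
      and "Suc t - (n + k - 1) = Suc (t - (n + k - 1))" using that by auto
    then show ?thesis using tail[of t] tail[of "Suc t"] lp by (simp add: admissible_path_def)
  qed
  have "n + k + K0 - (n + k - 1) = Suc K0" using k1 by simp
  then have "?u (n + k + K0) = z 0" using tail[of "n + k + K0"] lp by (simp add: admissible_path_def)
  moreover have "?u 0 = z 0"
    using closing_word_prefix[OF p, of 0] preimagesD(2)[OF p] k1 by (simp add: agree_def)
  ultimately show "?u (n + k + K0) = ?u 0" by simp
qed

lemma return_word_closing_word:
  assumes p: "(n, y) \<in> preimages x" and s: "s < k + K0"
  shows "return_word x s = closing_word n y x (n + s)"
proof (cases "s < k - 1")
  case True
  then have "n + s < n + k - 1" by linarith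
  then show ?thesis using True preimagesD(3)[OF p, of s]
    by (simp add: return_word_def closing_word_def prepend_before add.commute)
next
  case False
  then have "s - (k - 1) < Suc K0" "n + s - (n + k - 1) = s - (k - 1)" "n + k - 1 \<le> n + s"
    using s k1 by auto
  then show ?thesis using False
    by (simp add: return_word_def closing_word_def prepend_before prepend_after)
qed

lemma return_word_tail:
  assumes "k + K0 \<le> s"
  shows "return_word x s = z (s - (k + K0))"
proof -
  have "k - 1 \<le> s" "Suc K0 \<le> s - (k - 1)" "s - (k - 1) - Suc K0 = s - (k + K0)"
    using assms k1 by auto
  then show ?thesis by (simp add: return_word_def prepend_after)
qed

lemma closing_periodic_point:
  assumes p: "(n, y) \<in> preimages x"
  obtains q where "q \<in> Sigma_M M" and "shiftn (n + k + K0) q = q"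
    and "\<And>j. j < n \<Longrightarrow> agree k (shiftn j y) (shiftn j q)"
    and "\<And>t. t < k + K0 \<Longrightarrow> agree k (shiftn t (return_word x)) (shiftn (n + t) q)"
proof -
  define P where "P = n + k + K0"
  define q where "q = (\<lambda>t. closing_word n y x (t mod P))"
  have Ppos: "0 < P" using k1 by (simp add: P_def)
  have qS: "q \<in> Sigma_M M" and qper: "shiftn P q = q"
    unfolding q_def P_def using periodic_extension[where M = M and u = "closing_word n y x", OF _ closing_word_loop[OF p]] Ppos
    by (auto simp: P_def)
  have q_before: "agree k (shiftn j y) (shiftn j q)" if "j < n" for j
    using that closing_word_prefix[OF p] by (auto simp: agree_def shiftn_def q_def P_def)
  have q_after: "agree k (shiftn t (return_word x)) (shiftn (n + t) q)" if t: "t < k + K0" for t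
    unfolding agree_def
  proof (intro allI impI)
    fix i assume i: "i < k"
    show "shiftn t (return_word x) i = shiftn (n + t) q i"
    proof (cases "i + t < k + K0")
      case True
      then have "(i + (n + t)) mod P = n + (i + t)" by (simp add: P_def)
      then show ?thesis using return_word_closing_word[OF p True] by (simp add: shiftn_def q_def)
    next
      case False
      define s where "s = i + t - (k + K0)"
      have s: "s < k" "i + (n + t) = s + P" using False i t by (auto simp: s_def P_def)
      have "(s + P) mod P = s" using s(1) by (simp add: P_def)
      then have "q (i + (n + t)) = z s"
        using s closing_word_prefix[OF p, of s] preimagesD(2)[OF p] by (simp add: q_def agree_def)
      moreover have "return_word x (i + t) = z s" using False return_word_tail by (simp add: s_def)
      ultimately show ?thesis by (simp add: shiftn_def add.commute add.left_commute)
    qed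
  qed
  show ?thesis using that qS qper q_before q_after by (simp add: P_def)
qed

(* closing an orbit segment and using the periodic bound b shows that Birkhoff sums over
   preimage segments decrease at rate gap, below a constant depending on x only *)
lemma birkhoff_bound:
  assumes p: "(n, y) \<in> preimages x"
  shows "birkhoff n y \<le> bound_const x - real n * gap"
proof -
  have y: "y \<in> Sigma_M M" by (rule preimagesD(1)[OF p])
  have x: "x \<in> Sigma_M M" using preimages_Sigma[OF p] .
  obtain q where qS: "q \<in> Sigma_M M" and qper: "shiftn (n + k + K0) q = q"
    and before: "\<And>j. j < n \<Longrightarrow> agree k (shiftn j y) (shiftn j q)"
    and after: "\<And>t. t < k + K0 \<Longrightarrow> agree k (shiftn t (return_word x)) (shiftn (n + t) q)"
    using closing_periodic_point[OF p] by blast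
  have s1: "(\<Sum>j<n. A (shiftn j y)) \<le> (\<Sum>j<n. A (shiftn j q)) + real n * gap"
    by (rule sum_le_of_agree[OF osc_k]) (use before y qS shiftn_Sigma in blast)
  have s2: "(\<Sum>t<k + K0. A (shiftn t (return_word x)))
            \<le> (\<Sum>t<k + K0. A (shiftn (n + t) q)) + real (k + K0) * gap"
    by (rule sum_le_of_agree[OF osc_k])
      (use after return_word_Sigma[OF x] qS shiftn_Sigma in blast)
  have "(\<Sum>j<n + (k + K0). A (shiftn j q)) \<le> real (n + (k + K0)) * b"
    using periodic[OF qS _ qper] k1 by (simp add: add.assoc)
  then have sP: "(\<Sum>j<n. A (shiftn j q)) + (\<Sum>t<k + K0. A (shiftn (n + t) q))
                   \<le> real n * b + real (k + K0) * b"
    by (simp only: sum_lessThan_add_split of_nat_add distrib_right)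
  have "birkhoff n y = (\<Sum>j<n. A (shiftn j y)) - real n * (b + 2 * gap)"
    by (simp add: birkhoff_def sum_subtractf)
  moreover have "real n * (b + 2 * gap) = real n * b + 2 * (real n * gap)"
    and "real (k + K0) * (b + gap) = real (k + K0) * b + real (k + K0) * gap"
    by (simp_all add: algebra_simps)
  ultimately show ?thesis using s1 s2 sP unfolding bound_const_def by linarith
qed

lemma birkhoff_le_bound: "(n, y) \<in> preimages x \<Longrightarrow> birkhoff n y \<le> bound_const x"
  using birkhoff_bound[of n y x] gap_pos by (smt (verit) of_nat_0_le_iff mult_nonneg_nonneg)

lemma preimage_sums_bdd: "bdd_above ((\<lambda>(n, y). birkhoff n y) ` preimages x)"
  by (rule bdd_aboveI2) (use birkhoff_le_bound in auto)

lemma subaction_upper: "(n, y) \<in> preimages x \<Longrightarrow> birkhoff n y \<le> subaction x"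
  unfolding subaction_def by (rule cSup_upper[OF _ preimage_sums_bdd]) force

lemma subaction_le_bound:
  assumes "x \<in> Sigma_M M"
  shows "subaction x \<le> bound_const x"
  unfolding subaction_def using preimages_nonempty[OF assms] birkhoff_le_bound
  by (intro cSup_least) auto

lemma subaction_approx:
  assumes "x \<in> Sigma_M M" and "0 < d"
  obtains n y where "(n, y) \<in> preimages x" and "subaction x - d < birkhoff n y"
proof -
  have "subaction x - d < Sup ((\<lambda>(n, y). birkhoff n y) ` preimages x)"
    using assms(2) by (simp add: subaction_def)
  then show ?thesis
    using less_cSup_iff[OF _ preimage_sums_bdd] preimages_nonempty[OF assms(1)] that by force
qed

(* the sub-action inequality: extending a segment ending at sigma x by one step gives one ending at x *)
lemma subaction_inequality:
  assumes x: "x \<in> Sigma_M M"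
  shows "A x + subaction x - subaction (shift x) \<le> b + 2 * gap"
proof -
  have "birkhoff n y \<le> subaction (shift x) - A x + (b + 2 * gap)" if p: "(n, y) \<in> preimages x" for n y
  proof -
    have "(Suc n, y) \<in> preimages (shift x)" using p by (auto simp: preimages_def shiftn_Suc)
    moreover have "birkhoff (Suc n) y = birkhoff n y + A x - (b + 2 * gap)"
      using p by (simp add: birkhoff_def preimages_def)
    ultimately show ?thesis using subaction_upper by fastforce
  qed
  then have "subaction x \<le> subaction (shift x) - A x + (b + 2 * gap)"
    unfolding subaction_def using preimages_nonempty[OF x] by (intro cSup_least) auto
  then show ?thesis by linarith
qed

lemma preimage_transfer:
  assumes x': "x' \<in> Sigma_M M" and ag: "agree m x x'" and km: "k \<le> m"
    and osc_m: "\<forall>a\<in>Sigma_M M. \<forall>a'\<in>Sigma_M M. agree m a a' \<longrightarrow> \<bar>A a - A a'\<bar> \<le> \<eta>"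
    and p: "(n, y) \<in> preimages x"
  shows "(n, prepend n y x') \<in> preimages x'" and "birkhoff n y - real n * \<eta> \<le> birkhoff n (prepend n y x')"
proof -
  define y' where "y' = prepend n y x'"
  have y: "y \<in> Sigma_M M" and ya: "agree k y z" and yx: "\<And>i. y (i + n) = x i"
    using preimagesD[OF p] by auto
  have y'S: "y' \<in> Sigma_M M"
    unfolding y'_def using ag km k1 yx[of 0] by (intro splice_Sigma[OF y x']) (auto simp: agree_def)
  have y'y: "agree m (shiftn j y) (shiftn j y')" if j: "j \<le> n" for j
    unfolding agree_def
  proof (intro allI impI)
    fix i assume i: "i < m"
    show "shiftn j y i = shiftn j y' i"
    proof (cases "i + j < n")
      case False
      then have "x' (i + j - n) = x (i + j - n)" and "x (i + j - n) = y (i + j)"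
        using ag i j yx[of "i + j - n"] by (auto simp: agree_def)
      then show ?thesis using False by (simp add: shiftn_def y'_def prepend_def)
    qed (simp add: shiftn_def y'_def prepend_def)
  qed
  have "agree k y' z" using agree_mono[OF y'y[of 0] km] ya by (auto simp: agree_def)
  then show "(n, prepend n y x') \<in> preimages x'" using y'S by (simp add: preimages_def y'_def)
  have "(\<Sum>j<n. A (shiftn j y)) \<le> (\<Sum>j<n. A (shiftn j y')) + real n * \<eta>"
    by (rule sum_le_of_agree[OF osc_m]) (use y y'S shiftn_Sigma y'y less_imp_le in blast)
  then show "birkhoff n y - real n * \<eta> \<le> birkhoff n (prepend n y x')"
    by (simp add: birkhoff_def sum_subtractf y'_def)
qed

(* one half of the continuity estimate, used symmetrically: if segments with bounded length
   have small accumulated error, the sub-action cannot drop much from x to x' *)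
lemma subaction_drop_small:
  assumes x: "x \<in> Sigma_M M" and x': "x' \<in> Sigma_M M" and ag: "agree m x x'" and km: "k \<le> m"
    and osc_m: "\<forall>a\<in>Sigma_M M. \<forall>a'\<in>Sigma_M M. agree m a a' \<longrightarrow> \<bar>A a - A a'\<bar> \<le> \<eta>"
    and d: "0 < d" and short: "\<And>n. real n * gap \<le> bound_const x - subaction x + d \<Longrightarrow> real n * \<eta> \<le> d"
  shows "subaction x - 2 * d \<le> subaction x'"
proof -
  obtain n y where p: "(n, y) \<in> preimages x" and near: "subaction x - d < birkhoff n y"
    using subaction_approx[OF x d] by blast
  have "real n * \<eta> \<le> d" using short birkhoff_bound[OF p] near by force
  moreover have "birkhoff n y - real n * \<eta> \<le> subaction x'"
    using preimage_transfer[OF x' ag km osc_m p] subaction_upper by fastforce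
  ultimately show ?thesis using near by linarith
qed

lemma subaction_continuous: "subaction \<in> C0 lam M"
  unfolding C0_def
proof (intro CollectI ballI allI impI)
  fix x and ep :: real assume x: "x \<in> Sigma_M M" and ep: "0 < ep"
  define d where "d = ep / 4"
  define R where "R = bound_const x - subaction x + 3 * d"
  define \<eta> where "\<eta> = d / (R / gap + 1)"
  have d: "0 < d" using ep by (simp add: d_def)
  have R: "0 < R" using subaction_le_bound[OF x] d by (simp add: R_def)
  have denom: "0 < R / gap + 1" using R gap_pos by (simp add: add_pos_pos)
  have eta: "0 < \<eta>" unfolding \<eta>_def using denom d by simp
  have short: "real n * \<eta> \<le> d" if "real n * gap \<le> R" for n
  proof -
    have "real n \<le> R / gap" using that gap_pos by (simp add: pos_le_divide_eq)
    then have "real n * \<eta> \<le> R / gap * \<eta>" using eta by (intro mult_right_mono) auto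
    also have "\<dots> \<le> (R / gap + 1) * \<eta>" using eta by (simp add: ring_distribs)
    also have "\<dots> = d" using denom by (simp add: \<eta>_def)
    finally show ?thesis .
  qed
  obtain m0 where "\<forall>a\<in>Sigma_M M. \<forall>a'\<in>Sigma_M M. agree m0 a a' \<longrightarrow> \<bar>A a - A a'\<bar> \<le> \<eta>"
    using osc[OF eta] by blast
  then have osc_m: "\<forall>a\<in>Sigma_M M. \<forall>a'\<in>Sigma_M M. agree (max m0 k) a a' \<longrightarrow> \<bar>A a - A a'\<bar> \<le> \<eta>"
    by (rule unif_cont_agree_mono) simp
  show "\<exists>\<delta>>0. \<forall>y\<in>Sigma_M M. dist_lam lam x y < \<delta> \<longrightarrow> \<bar>subaction y - subaction x\<bar> < ep"
  proof (intro exI[of _ "lam ^ max m0 k"] conjI ballI impI)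
    show "0 < lam ^ max m0 k" using lam0 by simp
    fix x' assume x': "x' \<in> Sigma_M M" and dx: "dist_lam lam x x' < lam ^ max m0 k"
    have ag: "agree (max m0 k) x x'" by (rule dist_less_imp_agree[OF lam0 lam1 dx])
    have same_bound: "bound_const x' = bound_const x"
      using return_word_agree[OF agree_mono[OF ag]] by (simp add: bound_const_def)
    have i: "subaction x - 2 * d \<le> subaction x'"
    proof (rule subaction_drop_small[OF x x' ag _ osc_m d])
      show "real n * \<eta> \<le> d" if "real n * gap \<le> bound_const x - subaction x + d" for n
        using that d by (intro short) (unfold R_def, linarith)
    qed simp
    have ii: "subaction x' - 2 * d \<le> subaction x"
    proof (rule subaction_drop_small[OF x' x agree_sym[OF ag] _ osc_m d])
      show "real n * \<eta> \<le> d" if "real n * gap \<le> bound_const x' - subaction x' + d" for n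
        using that i same_bound by (intro short) (unfold R_def, linarith)
    qed simp
    show "\<bar>subaction x' - subaction x\<bar> < ep" using i ii d by (simp add: d_def)
  qed
qed

end

lemma continuous_subaction_exists:
  assumes lam: "0 < lam" "lam < 1" and prim: "primitive_with M F K0"
    and uc: "unif_cont_pot lam M A" and z: "z \<in> Sigma_M M"
    and b: "beta M A \<le> ereal b" and bc: "b < c"
  shows "\<exists>g\<in>C0 lam M. \<forall>x\<in>Sigma_M M. A x + g x - g (shift x) \<le> c"
proof -
  obtain k0 where k0: "\<forall>a\<in>Sigma_M M. \<forall>a'\<in>Sigma_M M. agree k0 a a' \<longrightarrow> \<bar>A a - A a'\<bar> \<le> (c - b) / 2"
    using unif_cont_agree[OF lam uc, of "(c - b) / 2"] bc by auto
  interpret subaction_construction M K0 A lam b "(c - b) / 2" z "Suc k0"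
  proof
    show "\<exists>l. admissible_path M K0 (x i) (y j) l" if "x \<in> Sigma_M M" "y \<in> Sigma_M M" for x y i j
      using primitive_path_exists[OF prim that] .
    show "\<exists>m. \<forall>a\<in>Sigma_M M. \<forall>a'\<in>Sigma_M M. agree m a a' \<longrightarrow> \<bar>A a - A a'\<bar> \<le> \<eta>"
      if "\<eta> > 0" for \<eta>
      using unif_cont_agree[OF lam uc that] .
    show "(\<Sum>j<P. A (shiftn j q)) \<le> real P * b" if "q \<in> Sigma_M M" "0 < P" "shiftn P q = q" for q P
      using periodic_sum_le_beta[OF unif_cont_measurable[OF lam uc] that b] .
    show "\<forall>a\<in>Sigma_M M. \<forall>a'\<in>Sigma_M M. agree (Suc k0) a a' \<longrightarrow> \<bar>A a - A a'\<bar> \<le> (c - b) / 2"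
      using k0 by (rule unif_cont_agree_mono) simp
  qed (use lam z bc in auto)
  have "b + 2 * ((c - b) / 2) = c" by (simp add: field_simps)
  then show ?thesis using subaction_continuous subaction_inequality by metis
qed

lemma inf_sup_le_beta:
  assumes lam: "0 < lam" "lam < 1" and prim: "primitive_with M F K0"
    and uc: "unif_cont_pot lam M A"
  shows "(INF f\<in>C0 lam M. SUP x\<in>Sigma_M M. ereal (A x + f x - f (shift x))) \<le> beta M A"
    (is "?R \<le> _")
proof (cases "Sigma_M M = {}")
  case True
  have zero_C0: "(\<lambda>_. 0) \<in> C0 lam M" unfolding C0_def by (auto intro: exI[of _ 1])
  have "?R \<le> (SUP x\<in>Sigma_M M. ereal (A x + 0 - 0))" by (rule INF_lower2[OF zero_C0]) simp
  also have "\<dots> = -\<infinity>" using True by (simp add: bot_ereal_def)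
  finally show ?thesis by simp
next
  case False
  then obtain z where z: "z \<in> Sigma_M M" by blast
  have below: "?R \<le> ereal c" if bb: "beta M A < ereal b" and bc: "b < c" for b c
  proof -
    obtain g where g: "g \<in> C0 lam M" "\<forall>x\<in>Sigma_M M. A x + g x - g (shift x) \<le> c"
      using continuous_subaction_exists[OF lam prim uc z less_imp_le[OF bb] bc] by blast
    have "?R \<le> (SUP x\<in>Sigma_M M. ereal (A x + g x - g (shift x)))" by (rule INF_lower[OF g(1)])
    also have "\<dots> \<le> ereal c" using g(2) by (intro SUP_least) simp
    finally show ?thesis .
  qed
  show ?thesis
  proof (rule ccontr)
    assume "\<not> ?R \<le> beta M A"
    then have "beta M A < ?R" by simp
    then obtain c where c: "beta M A < ereal c" "ereal c < ?R" using ereal_dense2 by blast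
    then obtain b where "beta M A < ereal b" "ereal b < ereal c" using ereal_dense2 by blast
    then show False using below[of b c] c(2) by simp
  qed
qed

theorem mainTheorem3:
  fixes lam :: real and M :: "nat \<Rightarrow> nat \<Rightarrow> bool" and F :: "nat set" and K0 :: nat
    and A :: "(nat \<Rightarrow> nat) \<Rightarrow> real"
  assumes "0 < lam" and "lam < 1"
    and "primitive_with M F K0"
    and "unif_cont_pot lam M A"
    and "\<exists>C. \<forall>x\<in>Sigma_M M. A x \<le> C"
    and "\<exists>c. \<forall>x\<in>(\<Union>i\<in>F. cyl M i). c \<le> A x"
  shows "beta M A =
    (INF f\<in>C0 lam M. SUP x\<in>Sigma_M M. ereal (A x + f x - f (shift x)))"
proof (rule antisym)
  obtain C where "\<forall>x\<in>Sigma_M M. A x \<le> C" using assms(5) by blast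
  then show "beta M A \<le> (INF f\<in>C0 lam M. SUP x\<in>Sigma_M M. ereal (A x + f x - f (shift x)))"
    by (rule beta_le_inf_sup[OF assms(1,2,4)])
  show "(INF f\<in>C0 lam M. SUP x\<in>Sigma_M M. ereal (A x + f x - f (shift x))) \<le> beta M A"
    by (rule inf_sup_le_beta[OF assms(1-4)])
qed

end
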